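(* Let $\alpha\ge 0$ and $p>1$, set $\beta=\frac{\alpha+2}{p+1}$, and let $n$ be a positive integer with $\beta(\beta+n-2)>0$. Let $w$ be the solution of \[ w''+\frac{n-1}{t}w'=\frac{t^{\alpha}}{w^p},\qquad w(0)=1,\quad w'(0)=0, \] and let $w_0(t)=c_0t^{\beta}$ with $c_0=\bigl[\beta(\beta+n-2)\bigr]^{-1/(p+1)}$. If $w$ and $w_0$ intersect infinitely many times on $(0,\infty)$, then the solution curve of the MEMS problem makes infinitely many turns, i.e. $\lambda(t)=t^{\alpha+2}/w(t)^{p+1}$ has $\lambda'(t)$ changing sign infinitely many times on $(0,\infty)$.
   Context: The MEMS problem is \[ u''+\frac{n-1}{r}u'+\lambda\frac{r^{\alpha}}{(1-u)^p}=0\quad(0<r<1),\qquad u'(0)=u(1)=0,\qquad 0<u<1. \] The solution $w$ is positive and increasing and is defined for all $t>0$. The function $w_0$ solves the same differential equation as $w$. The solution curve is $t\mapsto(\lambda,u(0))=(t^{\alpha+2}/w(t)^{p+1},\,1-1/w(t))$, $t\in(0,\infty)$, with $u(r)=1-w(tr)/w(t)$ the solution at $\lambda(t)$. A turn is a sign change of $\lambda'(t)$. *)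

theory Defs
  imports "HOL-Analysis.Analysis"
begin

definition infinitely_many_sign_changes :: "(real \<Rightarrow> real) \<Rightarrow> real set \<Rightarrow> bool" where
  "infinitely_many_sign_changes f S \<longleftrightarrow>
     (\<forall>N::nat. \<exists>s::nat \<Rightarrow> real. strict_mono_on {..N} s \<and> (\<forall>i\<le>N. s i \<in> S) \<and>
        (\<forall>i<N. f (s i) * f (s (Suc i)) < 0))"

definition w_solution :: "real \<Rightarrow> real \<Rightarrow> nat \<Rightarrow> (real \<Rightarrow> real) \<Rightarrow> bool" where
  "w_solution \<alpha> p n w \<longleftrightarrow>
     (\<exists>w1 w2. w 0 = 1 \<and> (\<forall>t\<ge>0. w t > 0) \<and>
        (w has_real_derivative 0) (at 0 within {0..}) \<and> w1 0 = 0 \<and>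
        continuous_on {0..} w1 \<and>
        (\<forall>t>0. (w has_real_derivative w1 t) (at t) \<and>
               (w1 has_real_derivative w2 t) (at t) \<and>
               w2 t + (real n - 1) / t * w1 t = t powr \<alpha> / (w t) powr p))"

end

theory Submission
  imports Defs
begin

(*
  Write w(t) = t^\<beta> u(t). In the variable s = ln t the function u solves the autonomous
  equation u'' + k u' + b u = u^(-p) with k = 2\<beta> + n - 2 > 0, whose equilibrium c0
  corresponds to w0; moreover \<lambda>(t) = u(t)^(-(p+1)), so \<lambda>' has the sign of -u'.
  The energy E = u'^2/2 + G(u) - G(c0), where G' = b u - u^(-p) and G is minimal at c0,
  satisfies E' = -k u'^2, so t^(2k) E is nondecreasing. Hence u' and u - c0 never vanish
  together: otherwise E \<le> 0, hence u' = 0, on an interval (0, s], so w = c0 t^\<beta> near 0,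
  contradicting w(0) = 1. Between two crossings of w and w0 (zeros of u - c0) u therefore
  has a critical point off c0, so u' takes both signs there; infinitely many crossings give
  infinitely many sign changes of \<lambda>'.
*)

definition emden_potential :: "real \<Rightarrow> real \<Rightarrow> real \<Rightarrow> real" where
  "emden_potential b p x = b * x\<^sup>2 / 2 + x powr (1 - p) / (p - 1)"

lemma emden_potential_has_derivative:
  assumes "p \<noteq> 1" "x > 0"
  shows "(emden_potential b p has_real_derivative b * x - x powr (-p)) (at x)"
  unfolding emden_potential_def using assms
  by (auto intro!: derivative_eq_intros) (simp add: field_simps)

lemma emden_potential_deriv_sign:
  fixes b p x :: real
  assumes "b > 0" "p > -1" "x > 0"
  shows "b * x - x powr (-p) \<ge> 0 \<longleftrightarrow> x \<ge> b powr (-1 / (p + 1))"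
    and "b * x - x powr (-p) \<le> 0 \<longleftrightarrow> x \<le> b powr (-1 / (p + 1))"
proof -
  define c where "c = b powr (-1 / (p + 1))"
  have "c > 0" unfolding c_def using assms(1) by simp
  have "c powr (p + 1) = b powr (-1)"
    using assms by (simp add: c_def powr_powr)
  then have c: "c powr (p + 1) = 1 / b"
    using assms by (simp add: powr_minus_divide)
  have "c \<le> x \<longleftrightarrow> c powr (p + 1) \<le> x powr (p + 1)" "x \<le> c \<longleftrightarrow> x powr (p + 1) \<le> c powr (p + 1)"
    using assms \<open>c > 0\<close> powr_mono2[of "p + 1" c x] powr_less_mono2[of "p + 1" x c]
      powr_mono2[of "p + 1" x c] powr_less_mono2[of "p + 1" c x]
    by linarith+
  then have "x \<ge> c \<longleftrightarrow> b * x powr (p + 1) \<ge> 1" "x \<le> c \<longleftrightarrow> b * x powr (p + 1) \<le> 1"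
    unfolding c using assms(1) by (simp_all add: field_simps)
  moreover have "b * x - x powr (-p) = x powr (-p) * (b * x powr (p + 1) - 1)"
  proof -
    have "x powr (-p) * x powr (p + 1) = x" using assms by (simp add: powr_add[symmetric])
    then show ?thesis by (simp add: right_diff_distrib mult.left_commute)
  qed
  ultimately show "b * x - x powr (-p) \<ge> 0 \<longleftrightarrow> x \<ge> b powr (-1 / (p + 1))"
    "b * x - x powr (-p) \<le> 0 \<longleftrightarrow> x \<le> b powr (-1 / (p + 1))"
    using assms by (simp_all add: c_def zero_le_mult_iff mult_le_0_iff)
qed

lemma emden_potential_minimum:
  assumes "b > 0" "p > -1" "p \<noteq> 1" "x > 0"
  shows "emden_potential b p (b powr (-1 / (p + 1))) \<le> emden_potential b p x"
proof (cases "x \<ge> b powr (-1 / (p + 1))")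
  case True
  show ?thesis
  proof (rule DERIV_nonneg_imp_nondecreasing[OF True])
    fix y assume "b powr (-1 / (p + 1)) \<le> y"
    moreover have "y > 0"
      using calculation assms(1) powr_gt_zero[of b "-1 / (p + 1)"] by linarith
    ultimately show "\<exists>d. (emden_potential b p has_real_derivative d) (at y) \<and> d \<ge> 0"
      using assms emden_potential_has_derivative[of p y b] emden_potential_deriv_sign(1)[of b p y]
      by auto
  qed
next
  case False
  show ?thesis
  proof (rule DERIV_nonpos_imp_nonincreasing[of x])
    fix y assume "x \<le> y" "y \<le> b powr (-1 / (p + 1))"
    moreover have "y > 0" using calculation assms(4) by linarith
    ultimately show "\<exists>d. (emden_potential b p has_real_derivative d) (at y) \<and> d \<le> 0"
      using assms emden_potential_has_derivative[of p y b] emden_potential_deriv_sign(2)[of b p y]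
      by auto
  qed (use False in simp)
qed

lemma infinite_imp_strict_mono_on_atMost:
  fixes Z :: "'a::linorder set" and N :: nat
  assumes "infinite Z"
  obtains z where "strict_mono_on {..N} z" "z ` {..N} \<subseteq> Z"
proof -
  obtain F where F: "finite F" "card F = Suc N" "F \<subseteq> Z"
    using infinite_arbitrarily_large[OF assms] by blast
  define xs where "xs = sorted_list_of_set F"
  have xs: "sorted_wrt (<) xs" "set xs = F" "length xs = Suc N"
    using F by (simp_all add: xs_def)
  have "strict_mono_on {..N} ((!) xs)"
    by (rule strict_mono_onI) (use xs in \<open>auto intro: sorted_wrt_nth_less\<close>)
  moreover have "(!) xs ` {..N} \<subseteq> Z"
    using xs F(3) by auto
  ultimately show thesis by (rule that)
qed

lemma infinitely_many_sign_changesI: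
  assumes "infinite Z"
    and pos: "\<And>x y. x \<in> Z \<Longrightarrow> y \<in> Z \<Longrightarrow> x < y \<Longrightarrow> \<exists>a\<in>{x<..<y} \<inter> S. f a > 0"
    and neg: "\<And>x y. x \<in> Z \<Longrightarrow> y \<in> Z \<Longrightarrow> x < y \<Longrightarrow> \<exists>a\<in>{x<..<y} \<inter> S. f a < 0"
  shows "infinitely_many_sign_changes f S"
  unfolding infinitely_many_sign_changes_def
proof
  fix N :: nat
  obtain z where z: "strict_mono_on {..Suc N} z" "z ` {..Suc N} \<subseteq> Z"
    using infinite_imp_strict_mono_on_atMost[OF assms(1)] by blast
  define good where
    "good j a \<longleftrightarrow> a \<in> {z j<..<z (Suc j)} \<inter> S \<and> (if even j then f a > 0 else f a < 0)" for j a
  define s where "s j = (SOME a. good j a)" for j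
  have s: "good j (s j)" if "j \<le> N" for j
  proof -
    have "z j \<in> Z" "z (Suc j) \<in> Z" "z j < z (Suc j)"
      using z that by (auto simp: strict_mono_on_def)
    then have "\<exists>a. good j a"
      using pos[of "z j" "z (Suc j)"] neg[of "z j" "z (Suc j)"] unfolding good_def
      by (cases "even j") auto
    then show ?thesis unfolding s_def by (rule someI_ex)
  qed
  have "strict_mono_on {..N} s"
  proof (rule strict_mono_onI)
    fix i j assume "i \<in> {..N}" "j \<in> {..N}" "i < j"
    then have "s i < z (Suc i)" "z (Suc i) \<le> z j" "z j < s j"
      using s[of i] s[of j] z(1) unfolding good_def
      by (auto simp: strict_mono_on_leD)
    then show "s i < s j" by linarith
  qed
  moreover have "f (s i) * f (s (Suc i)) < 0" if "i < N" for i
    using s[of i] s[of "Suc i"] that unfolding good_def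
    by (cases "even i") (auto simp: mult_pos_neg mult_neg_pos)
  ultimately show "\<exists>s. strict_mono_on {..N} s \<and> (\<forall>i\<le>N. s i \<in> S) \<and> (\<forall>i<N. f (s i) * f (s (Suc i)) < 0)"
    using s unfolding good_def by blast
qed

lemma deriv_changes_sign_between_equal_values:
  fixes g g' :: "real \<Rightarrow> real"
  assumes "a < b" "g a = g b"
    and deriv: "\<And>x. a \<le> x \<Longrightarrow> x \<le> b \<Longrightarrow> (g has_real_derivative g' x) (at x)"
    and "\<And>x. a < x \<Longrightarrow> x < b \<Longrightarrow> g' x = 0 \<Longrightarrow> g x \<noteq> g a"
  shows "\<exists>x\<in>{a<..<b}. g' x > 0" and "\<exists>x\<in>{a<..<b}. g' x < 0"
proof -
  obtain m where m: "a < m" "m < b" "g b - g a = (b - a) * g' m"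
    using MVT2[OF assms(1) deriv] by blast
  then have "g m \<noteq> g a" using assms by simp
  obtain x where x: "a < x" "x < m" "g m - g a = (m - a) * g' x"
    using MVT2[OF \<open>a < m\<close>, of g g'] deriv m by force
  obtain y where y: "m < y" "y < b" "g b - g m = (b - m) * g' y"
    using MVT2[OF \<open>m < b\<close>, of g g'] deriv m by force
  have eq: "(b - m) * g' y = - ((m - a) * g' x)"
    using x(3) y(3) assms(2) by linarith
  have "(m - a) * (b - m) * (g' x * g' y) = ((m - a) * g' x) * ((b - m) * g' y)"
    by (simp only: mult_ac)
  also have "\<dots> = - ((m - a) * g' x)\<^sup>2"
    unfolding eq by (simp add: power2_eq_square)
  finally have "(m - a) * (b - m) * (g' x * g' y) = - ((m - a) * g' x)\<^sup>2" .
  moreover have "(m - a) * g' x \<noteq> 0" using x(3) \<open>g m \<noteq> g a\<close> by force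
  ultimately have "(m - a) * (b - m) * (g' x * g' y) < 0" by simp
  moreover have "(m - a) * (b - m) > 0" using m by simp
  ultimately have "g' x * g' y < 0" by (metis mult_less_cancel_left_pos mult_zero_right)
  then have "g' x > 0 \<and> g' y < 0 \<or> g' x < 0 \<and> g' y > 0" by (simp add: mult_less_0_iff)
  moreover have "x \<in> {a<..<b}" "y \<in> {a<..<b}" using x y m by auto
  ultimately show "\<exists>x\<in>{a<..<b}. g' x > 0" "\<exists>x\<in>{a<..<b}. g' x < 0" by blast+
qed

locale emden_fowler =
  fixes \<alpha> p :: real and n :: nat and w w' w'' :: "real \<Rightarrow> real"
  assumes alpha_gt: "\<alpha> > -2" and p_gt_1: "p > 1"
    and b_pos: "(\<alpha> + 2) / (p + 1) * ((\<alpha> + 2) / (p + 1) + real n - 2) > 0"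
    and w_tendsto_1: "(w \<longlongrightarrow> 1) (at_right 0)"
    and w_pos: "\<And>t. t > 0 \<Longrightarrow> w t > 0"
    and w_deriv: "\<And>t. t > 0 \<Longrightarrow> (w has_real_derivative w' t) (at t)"
    and w'_deriv: "\<And>t. t > 0 \<Longrightarrow> (w' has_real_derivative w'' t) (at t)"
    and ode: "\<And>t. t > 0 \<Longrightarrow> w'' t + (real n - 1) / t * w' t = t powr \<alpha> / w t powr p"
begin

definition \<beta> :: real where "\<beta> = (\<alpha> + 2) / (p + 1)"
definition b :: real where "b = \<beta> * (\<beta> + real n - 2)"
definition k :: real where "k = 2 * \<beta> + real n - 2"
definition c0 :: real where "c0 = b powr (-1 / (p + 1))"

definition u :: "real \<Rightarrow> real" where "u t = t powr (-\<beta>) * w t"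
(* q t = t * u' t, the derivative of u with respect to ln t *)
definition q :: "real \<Rightarrow> real" where "q t = t powr (1 - \<beta>) * w' t - \<beta> * u t"

lemma beta_pos: "\<beta> > 0"
  using alpha_gt p_gt_1 by (simp add: \<beta>_def)

lemma b_gt_0: "b > 0"
  using b_pos by (simp add: b_def \<beta>_def)

lemma k_pos: "k > 0"
proof -
  have "\<beta> + real n - 2 > 0" using b_gt_0 beta_pos by (simp add: b_def zero_less_mult_iff)
  then show ?thesis using beta_pos by (simp add: k_def)
qed

lemma u_pos: "t > 0 \<Longrightarrow> u t > 0"
  by (simp add: u_def w_pos)

lemma powr_minus_beta_shifts:
  assumes "t > 0"
  shows "t powr (-\<beta> - 1) = t powr (-\<beta>) / t" and "t powr (1 - \<beta>) = t * t powr (-\<beta>)"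
  using assms by (simp_all add: powr_diff powr_minus field_simps)

lemma u_has_derivative:
  assumes "t > 0"
  shows "(u has_real_derivative q t / t) (at t)"
proof -
  have "(u has_real_derivative -\<beta> * t powr (-\<beta> - 1) * w t + t powr (-\<beta>) * w' t) (at t)"
    unfolding u_def using assms w_deriv[OF assms] by (auto intro!: derivative_eq_intros)
  moreover have "-\<beta> * t powr (-\<beta> - 1) * w t + t powr (-\<beta>) * w' t = q t / t"
    using assms by (simp add: q_def u_def powr_minus_beta_shifts field_simps)
  ultimately show ?thesis by simp
qed

lemma u_powr_minus_p:
  assumes "t > 0"
  shows "u t powr (-p) = t * t * t powr (-\<beta>) * (t powr \<alpha> / w t powr p)"
proof -
  have "\<beta> * p = \<alpha> + 1 + 1 + -\<beta>"
    using p_gt_1 by (simp add: \<beta>_def field_simps)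
  have "u t powr (-p) = (t powr (-\<beta>)) powr (-p) * w t powr (-p)"
    by (simp only: u_def powr_mult)
  also have "\<dots> = t powr (\<beta> * p) * w t powr (-p)"
    by (simp only: powr_powr mult_minus_left mult_minus_right minus_minus)
  also have "\<dots> = t powr \<alpha> * t powr 1 * t powr 1 * t powr (-\<beta>) * w t powr (-p)"
    by (simp only: \<open>\<beta> * p = _\<close> powr_add)
  also have "\<dots> = t * t * t powr (-\<beta>) * (t powr \<alpha> / w t powr p)"
    using assms by (simp add: powr_minus_divide)
  finally show ?thesis .
qed

lemma emden_fowler_equation:
  assumes "t > 0"
  shows "(1 - \<beta>) * t powr (-\<beta>) * w' t + w'' t * t powr (1 - \<beta>) - \<beta> * (q t / t)
    = (u t powr (-p) - b * u t - k * q t) / t"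
proof -
  define X where "X = t powr (-\<beta>) * w' t"
  define Y where "Y = t powr (-\<beta>) * (t powr \<alpha> / w t powr p)"
  have X: "X = (q t + \<beta> * u t) / t"
    using assms by (simp add: X_def q_def powr_minus_beta_shifts field_simps)
  have "t * w'' t = t * (t powr \<alpha> / w t powr p) - (real n - 1) * w' t"
    using ode[OF assms] assms by (simp add: field_simps)
  then have "t powr (-\<beta>) * (t * w'' t)
      = t powr (-\<beta>) * (t * (t powr \<alpha> / w t powr p) - (real n - 1) * w' t)"
    by simp
  then have "t * (t powr (-\<beta>) * w'' t) = t * Y - (real n - 1) * X"
    unfolding X_def Y_def by (simp only: right_diff_distrib mult.assoc mult.left_commute)
  then have "(1 - \<beta>) * t powr (-\<beta>) * w' t + w'' t * t powr (1 - \<beta>) - \<beta> * (q t / t)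
      = (2 - \<beta> - real n) * X + t * Y - \<beta> * (q t / t)"
    using assms by (simp add: X_def powr_minus_beta_shifts algebra_simps)
  also have "\<dots> = (u t powr (-p) - b * u t - k * q t) / t"
    unfolding X u_powr_minus_p[OF assms] Y_def using assms
    by (simp add: b_def k_def field_simps)
  finally show ?thesis .
qed

lemma q_has_derivative:
  assumes "t > 0"
  shows "(q has_real_derivative (u t powr (-p) - b * u t - k * q t) / t) (at t)"
proof -
  have "((\<lambda>t. t powr (1 - \<beta>)) has_real_derivative (1 - \<beta>) * t powr (-\<beta>)) (at t)"
    using has_real_derivative_powr[OF assms, of "1 - \<beta>"] by simp
  from DERIV_diff[OF DERIV_mult[OF this w'_deriv[OF assms]]
      DERIV_cmult[OF u_has_derivative[OF assms], of \<beta>]]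
  have "(q has_real_derivative
      (1 - \<beta>) * t powr (-\<beta>) * w' t + w'' t * t powr (1 - \<beta>) - \<beta> * (q t / t)) (at t)"
    unfolding q_def[abs_def] .
  then show ?thesis by (simp only: emden_fowler_equation[OF assms])
qed

definition energy :: "real \<Rightarrow> real" where
  "energy t = (q t)\<^sup>2 / 2 + emden_potential b p (u t) - emden_potential b p c0"

definition scaled_energy :: "real \<Rightarrow> real" where
  "scaled_energy t = t powr (2 * k) * energy t"

lemma energy_ge:
  assumes "t > 0"
  shows "energy t \<ge> (q t)\<^sup>2 / 2"
  using emden_potential_minimum[of b p "u t"] b_gt_0 p_gt_1 u_pos[OF assms]
  by (simp add: energy_def c0_def)

lemma energy_has_derivative:
  assumes "t > 0"
  shows "(energy has_real_derivative -(k / t) * (q t)\<^sup>2) (at t)"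
proof -
  have "(energy has_real_derivative
      q t * ((u t powr (-p) - b * u t - k * q t) / t) + (b * u t - u t powr (-p)) * (q t / t)) (at t)"
    unfolding energy_def[abs_def]
    using q_has_derivative[OF assms] u_has_derivative[OF assms] p_gt_1
      emden_potential_has_derivative[OF _ u_pos[OF assms], of p b]
    by (auto intro!: derivative_eq_intros DERIV_chain2[where f = "emden_potential b p"])
  moreover have "q t * ((u t powr (-p) - b * u t - k * q t) / t) + (b * u t - u t powr (-p)) * (q t / t)
      = -(k / t) * (q t)\<^sup>2"
    using assms by (simp add: power2_eq_square field_simps)
  ultimately show ?thesis by simp
qed

lemma scaled_energy_mono:
  assumes "0 < s" "s \<le> t"
  shows "scaled_energy s \<le> scaled_energy t"
proof (rule DERIV_nonneg_imp_nondecreasing[OF assms(2)])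
  fix x assume "s \<le> x" "x \<le> t"
  with assms have "x > 0" by simp
  have "(scaled_energy has_real_derivative
      2 * k * x powr (2 * k - 1) * energy x + x powr (2 * k) * (-(k / x) * (q x)\<^sup>2)) (at x)"
    unfolding scaled_energy_def[abs_def] using \<open>x > 0\<close> energy_has_derivative[OF \<open>x > 0\<close>]
    by (auto intro!: derivative_eq_intros)
  moreover have "2 * k * x powr (2 * k - 1) * energy x + x powr (2 * k) * (-(k / x) * (q x)\<^sup>2)
      = k * x powr (2 * k) / x * (2 * energy x - (q x)\<^sup>2)"
    using \<open>x > 0\<close> by (simp add: powr_diff field_simps)
  moreover have "k * x powr (2 * k) / x * (2 * energy x - (q x)\<^sup>2) \<ge> 0"
    using k_pos \<open>x > 0\<close> energy_ge[OF \<open>x > 0\<close>] by simp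
  ultimately show "\<exists>d. (scaled_energy has_real_derivative d) (at x) \<and> d \<ge> 0"
    by auto
qed

lemma u_ne_c0_at_critical_point:
  assumes "s > 0" "q s = 0"
  shows "u s \<noteq> c0"
proof
  assume "u s = c0"
  then have "scaled_energy s = 0"
    using assms by (simp add: scaled_energy_def energy_def)
  have q_zero: "q t = 0" if "0 < t" "t \<le> s" for t
  proof -
    have "scaled_energy t \<le> 0"
      using scaled_energy_mono[OF that] \<open>scaled_energy s = 0\<close> by simp
    then have "energy t \<le> 0"
      using that by (simp add: scaled_energy_def mult_le_0_iff)
    then have "(q t)\<^sup>2 \<le> 0"
      using energy_ge[OF that(1)] by linarith
    then show ?thesis by simp
  qed
  have "u t = c0" if t: "0 < t" "t < s" for t
  proof -
    obtain x where "t < x" "x < s" "u s - u t = (s - t) * (q x / x)"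
      using MVT2[OF t(2), of u "\<lambda>x. q x / x"] u_has_derivative t by force
    then show ?thesis
      using q_zero[of x] t \<open>u s = c0\<close> by simp
  qed
  then have "\<forall>\<^sub>F t in at_right 0. w t = c0 * t powr \<beta>"
    using assms(1) unfolding eventually_at_right_field
    by (auto simp: u_def powr_minus field_simps intro!: exI[of _ s])
  moreover have "((\<lambda>t. c0 * t powr \<beta>) \<longlongrightarrow> 0) (at_right 0)"
    using beta_pos by (auto intro!: tendsto_mult_right_zero tendsto_zero_powrI
        tendsto_ident_at simp: eventually_at_right_field intro: exI[of _ 1])
  ultimately have "(w \<longlongrightarrow> 0) (at_right 0)"
    by (simp add: tendsto_cong)
  from tendsto_unique[OF trivial_limit_at_right_real w_tendsto_1 this] show False
    by simp
qed

lemma lambda_eq_u_powr: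
  assumes "t > 0"
  shows "t powr (\<alpha> + 2) / w t powr (p + 1) = u t powr (-(p + 1))"
proof -
  have "u t powr (-(p + 1)) = (t powr (-\<beta>)) powr (-(p + 1)) * w t powr (-(p + 1))"
    by (simp only: u_def powr_mult)
  also have "\<dots> = t powr (\<beta> * (p + 1)) * w t powr (-(p + 1))"
    by (simp only: powr_powr mult_minus_left mult_minus_right minus_minus)
  also have "\<dots> = t powr (\<alpha> + 2) / w t powr (p + 1)"
    by (simp only: powr_minus_divide) (use p_gt_1 in \<open>simp add: \<beta>_def\<close>)
  finally show ?thesis ..
qed

lemma lambda_deriv:
  assumes "t > 0"
  shows "deriv (\<lambda>t. t powr (\<alpha> + 2) / w t powr (p + 1)) t
    = -(p + 1) * u t powr (-(p + 2)) * (q t / t)"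
proof -
  have "((\<lambda>t. u t powr (-(p + 1))) has_real_derivative
      -(p + 1) * u t powr (-(p + 2)) * (q t / t)) (at t)"
    using DERIV_fun_powr[OF u_has_derivative[OF assms] u_pos[OF assms], of "-(p + 1)"]
    by (simp add: algebra_simps)
  then have "((\<lambda>t. t powr (\<alpha> + 2) / w t powr (p + 1)) has_real_derivative
      -(p + 1) * u t powr (-(p + 2)) * (q t / t)) (at t)"
    by (rule has_field_derivative_transform_within_open[of _ _ _ "{0<..}"])
      (use assms lambda_eq_u_powr in auto)
  then show ?thesis by (rule DERIV_imp_deriv)
qed

lemma lambda_deriv_changes_sign_between_crossings:
  assumes "0 < z1" "z1 < z2" "u z1 = c0" "u z2 = c0"
  defines "lambda' \<equiv> deriv (\<lambda>t. t powr (\<alpha> + 2) / w t powr (p + 1))"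
  shows "\<exists>t\<in>{z1<..<z2}. lambda' t > 0" and "\<exists>t\<in>{z1<..<z2}. lambda' t < 0"
proof -
  have "\<exists>t\<in>{z1<..<z2}. q t / t > 0" "\<exists>t\<in>{z1<..<z2}. q t / t < 0"
    using deriv_changes_sign_between_equal_values[of z1 z2 u "\<lambda>t. q t / t"]
      assms(1-4) u_has_derivative u_ne_c0_at_critical_point by auto
  moreover have "lambda' t > 0 \<longleftrightarrow> q t / t < 0" "lambda' t < 0 \<longleftrightarrow> q t / t > 0" if "t > 0" for t
  proof -
    define C where "C = (p + 1) * u t powr (-(p + 2))"
    have "C > 0" using p_gt_1 u_pos[OF that] by (simp add: C_def)
    moreover have lambda': "lambda' t = - C * (q t / t)"
      unfolding lambda'_def lambda_deriv[OF that] C_def by (simp add: algebra_simps)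
    moreover have sign: "0 < - C * x \<longleftrightarrow> x < 0" "- C * x < 0 \<longleftrightarrow> 0 < x" for x
      using \<open>C > 0\<close> by (auto simp: zero_less_mult_iff mult_less_0_iff)
    ultimately show "lambda' t > 0 \<longleftrightarrow> q t / t < 0" "lambda' t < 0 \<longleftrightarrow> q t / t > 0"
      by (simp_all only: lambda' sign)
  qed
  ultimately show "\<exists>t\<in>{z1<..<z2}. lambda' t > 0" "\<exists>t\<in>{z1<..<z2}. lambda' t < 0"
    using assms(1) by (meson greaterThanLessThan_iff less_trans)+
qed

end

lemma w_solution_imp_emden_fowler:
  assumes "\<alpha> > -2" "p > 1" "(\<alpha> + 2) / (p + 1) * ((\<alpha> + 2) / (p + 1) + real n - 2) > 0"
    and "w_solution \<alpha> p n w"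
  obtains w' w'' where "emden_fowler \<alpha> p n w w' w''"
proof -
  obtain w' w'' where w: "w 0 = 1" "\<forall>t\<ge>0. w t > 0"
      "(w has_real_derivative 0) (at 0 within {0..})"
      "\<forall>t>0. (w has_real_derivative w' t) (at t) \<and> (w' has_real_derivative w'' t) (at t) \<and>
        w'' t + (real n - 1) / t * w' t = t powr \<alpha> / w t powr p"
    using assms(4) unfolding w_solution_def by blast
  have "(w \<longlongrightarrow> 1) (at 0 within {0..})"
    using DERIV_continuous[OF w(3)] w(1) by (simp add: continuous_within)
  then have "(w \<longlongrightarrow> 1) (at_right 0)"
    by (rule tendsto_within_subset) auto
  with assms(1-3) w have "emden_fowler \<alpha> p n w w' w''"
    by unfold_locales auto
  then show thesis by (rule that)
qed

theorem lemma4p1: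
  fixes \<alpha> p :: real and n :: nat and w :: "real \<Rightarrow> real"
  assumes "\<alpha> \<ge> 0" and "p > 1" and "n \<ge> 1"
    and "((\<alpha> + 2) / (p + 1)) * ((\<alpha> + 2) / (p + 1) + real n - 2) > 0"
    and "w_solution \<alpha> p n w"
    and "infinite {t. t > 0 \<and> w t =
            (((\<alpha> + 2) / (p + 1)) * ((\<alpha> + 2) / (p + 1) + real n - 2)) powr (-1 / (p + 1))
              * t powr ((\<alpha> + 2) / (p + 1))}"
  shows "infinitely_many_sign_changes
           (deriv (\<lambda>t. t powr (\<alpha> + 2) / (w t) powr (p + 1))) {0<..}"
proof -
  obtain w' w'' where "emden_fowler \<alpha> p n w w' w''"
    using w_solution_imp_emden_fowler[of \<alpha> p n w] assms(1,2,4,5) by force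
  then interpret emden_fowler \<alpha> p n w w' w'' .
  have crossings: "{t. t > 0 \<and> w t = c0 * t powr \<beta>} = {t. t > 0 \<and> u t = c0}"
    by (auto simp: u_def powr_minus field_simps)
  show ?thesis
  proof (rule infinitely_many_sign_changesI)
    show "infinite {t. t > 0 \<and> u t = c0}"
      using assms(6) crossings by (simp add: c0_def b_def \<beta>_def)
  qed (use lambda_deriv_changes_sign_between_crossings in force)+
qed

end
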